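(* The scheme $\mathsf{xhIBE}$ described below is strongly homomorphic for the class of circuits $\mathbb{C} = \{x \mapsto \langle v, x\rangle : v \in \mathbb{Z}_2^\ell\}$ of linear functions over $\mathbb{Z}_2$: for every identity $\mathsf{id}$, every $C \in \mathbb{C}$, every honestly generated parameters and keys, every bits $b_1,\dots,b_\ell$ and every ciphertexts $\psi_i \gets \mathsf{Encrypt}(\mathsf{PP}, \mathsf{id}, b_i)$, the distributions $\mathsf{Encrypt}(\mathsf{PP}, \mathsf{id}, C(b_1,\dots,b_\ell))$ and $\mathsf{Eval}(\mathsf{PP}, C, \psi_1,\dots,\psi_\ell)$ are statistically indistinguishable.
   Context: Scheme $\mathsf{xhIBE}$. Notation: $\nu:\{0,1\}\to\{1,-1\}$ with $\nu(0)=1,\nu(1)=-1$. $\left(\frac{\cdot}{N}\right)$ is the Jacobi symbol; $\mathbb{Z}_N^\ast[\pm 1]$ is the set of units mod $N$ with Jacobi symbol $\pm 1$. For $b \in \mathbb{Z}_N$ and $c(x) = c_0 + c_1 x$, $\mathsf{GT}(b, c(x)) = \left(\frac{c_0^2 - c_1^2 b}{N}\right)$. $H:\{0,1\}^\ast \to \mathbb{Z}_N^\ast[+1]$ is a full-domain hash. Setup$(1^\lambda)$: sample random primes $p,q$ until $p \equiv q \equiv 3 \pmod 4$; $N = pq$; $\mathsf{PP}=N$, $\mathsf{MSK}=(p,q)$. KeyGen$(\mathsf{MSK},\mathsf{id})$: $a = H(\mathsf{id})$, $r = a^{(N+5-p-q)/8} \bmod N$, output $(\mathsf{id}, r)$.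 Subroutine $E(\mathsf{PP}, a, b)$: sample $t_1, t_2 \xleftarrow{\$} \mathbb{Z}_N^\ast[\nu(b)]$, $g_1, g_2 \xleftarrow{\$} \mathbb{Z}_N^\ast$, set $c(x) = (t_1 + a g_1^2 t_1^{-1}) + 2 g_1 x$, $d(x) = (t_2 - a g_2^2 t_2^{-1}) + 2 g_2 x$; repeat until $\mathsf{GT}(a, c(x)) = 1$ and $\mathsf{GT}(-a, d(x)) = 1$; output $(c(x), d(x))$. Encrypt$(\mathsf{PP}, \mathsf{id}, b)$: $a = H(\mathsf{id})$, output $(c(x), d(x), a)$ with $(c(x),d(x)) \gets E(\mathsf{PP},a,b)$. Decrypt$((\mathsf{id},r), (c(x),d(x),a))$: if $r^2 \equiv a$ and $\mathsf{GT}(a,c(x))=1$ let $e = c$; else if $r^2 \equiv -a$ and $\mathsf{GT}(-a,d(x))=1$ let $e = d$; else output $\bot$; output $\nu^{-1}\big(\left(\frac{e(r)}{N}\right)\big)$. Eval$(\mathsf{PP}, C, (c_i,d_i,a_i)_{i\le\ell})$ for $C = (x \mapsto \langle v,x\rangle)$: abort with $\bot$ unless all $a_i$ equal $a$; $J = \{i : v_i = 1\}$; $c' = \prod_{i\in J} c_i \bmod (x^2 - a)$, $d' = \prod_{i\in J} d_i \bmod (x^2+a)$; $(c_z,d_z) \gets E(\mathsf{PP},a,0)$; output $(c' c_z \bmod (x^2-a),\ d' d_z \bmod (x^2+a),\ a)$. *)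

theory Defs
  imports "HOL-Number_Theory.Number_Theory" "HOL-Probability.Probability"
begin

(* nu : {0,1} -> {1,-1}; bits are modelled as bool, False = 0, True = 1 *)
definition nu :: "bool \<Rightarrow> int" where
  "nu b = (if b then -1 else 1)"

definition Jacobi :: "int \<Rightarrow> int \<Rightarrow> int" where
  "Jacobi a n = (\<Prod>p\<in>#prime_factorization (nat n). Legendre a (int p))"

definition units_mod :: "int \<Rightarrow> int set" where
  "units_mod N = {x. 0 \<le> x \<and> x < N \<and> coprime x N}"

definition unitsJ :: "int \<Rightarrow> int \<Rightarrow> int set" where
  "unitsJ N s = {x \<in> units_mod N. Jacobi x N = s}"

definition inv_mod :: "int \<Rightarrow> int \<Rightarrow> int" where
  "inv_mod N t = (SOME u. 0 \<le> u \<and> u < N \<and> [t * u = 1] (mod N))"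

(* A linear polynomial c0 + c1 x over Z_N is represented by the pair (c0, c1). *)
type_synonym lpoly = "int \<times> int"

definition GT :: "int \<Rightarrow> int \<Rightarrow> lpoly \<Rightarrow> int" where
  "GT N b c = Jacobi (fst c ^ 2 - snd c ^ 2 * b) N"

(* product of c(x) and e(x) in Z_N[x] reduced modulo (x^2 - s) *)
definition pmul :: "int \<Rightarrow> int \<Rightarrow> lpoly \<Rightarrow> lpoly \<Rightarrow> lpoly" where
  "pmul N s c e = ((fst c * fst e + s * snd c * snd e) mod N,
                   (fst c * snd e + snd c * fst e) mod N)"

definition E_cand :: "int \<Rightarrow> int \<Rightarrow> int \<times> int \<times> int \<times> int \<Rightarrow> lpoly \<times> lpoly" where
  "E_cand N a x = (case x of (t1, t2, g1, g2) \<Rightarrow>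
     (((t1 + a * g1^2 * inv_mod N t1) mod N, (2 * g1) mod N),
      ((t2 - a * g2^2 * inv_mod N t2) mod N, (2 * g2) mod N)))"

(* Subroutine E(PP, a, b): rejection sampling of uniform (t1,t2,g1,g2) until acceptance;
   its output distribution is the uniform distribution on the accepted tuples, mapped by E_cand. *)
definition E_acc :: "int \<Rightarrow> int \<Rightarrow> bool \<Rightarrow> (int \<times> int \<times> int \<times> int) set" where
  "E_acc N a b = {x. case x of (t1, t2, g1, g2) \<Rightarrow>
      t1 \<in> unitsJ N (nu b) \<and> t2 \<in> unitsJ N (nu b) \<and>
      g1 \<in> units_mod N \<and> g2 \<in> units_mod N \<and>
      GT N a (fst (E_cand N a x)) = 1 \<and> GT N (-a) (snd (E_cand N a x)) = 1}"

definition E :: "int \<Rightarrow> int \<Rightarrow> bool \<Rightarrow> (lpoly \<times> lpoly) pmf" where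
  "E N a b = map_pmf (E_cand N a) (pmf_of_set (E_acc N a b))"

type_synonym ctxt = "lpoly \<times> lpoly \<times> int"

definition Encrypt :: "int \<Rightarrow> (bool list \<Rightarrow> int) \<Rightarrow> bool list \<Rightarrow> bool \<Rightarrow> ctxt pmf" where
  "Encrypt N H idt b = map_pmf (\<lambda>(c, d). (c, d, H idt)) (E N (H idt) b)"

(* Eval(PP, x |-> <v,x>, psi_1..psi_l); None represents the abort symbol bottom *)
definition Eval :: "int \<Rightarrow> bool list \<Rightarrow> ctxt list \<Rightarrow> ctxt option pmf" where
  "Eval N v cts =
     (let a = snd (snd (hd cts)) in
      if (\<exists>ct\<in>set cts. snd (snd ct) \<noteq> a) then return_pmf None
      else
        (let J = filter (\<lambda>i. v ! i) [0..<length cts];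
             c' = fold (\<lambda>i acc. pmul N a acc (fst (cts ! i))) J (1, 0);
             d' = fold (\<lambda>i acc. pmul N (-a) acc (fst (snd (cts ! i)))) J (1, 0)
         in map_pmf (\<lambda>(cz, dz). Some (pmul N a c' cz, pmul N (-a) d' dz, a)) (E N a False)))"

definition ip2 :: "bool list \<Rightarrow> bool list \<Rightarrow> bool" where
  "ip2 v bs = odd (\<Sum>i<length v. (if v ! i \<and> bs ! i then 1 else 0 :: nat))"

definition SD :: "'a pmf \<Rightarrow> 'a pmf \<Rightarrow> real" where
  "SD P Q = (SUP A. \<bar>measure_pmf.prob P A - measure_pmf.prob Q A\<bar>)"

definition negligible :: "(nat \<Rightarrow> real) \<Rightarrow> bool" where
  "negligible f \<longleftrightarrow> (\<forall>c::nat. \<exists>n0. \<forall>n\<ge>n0. \<bar>f n\<bar> < 1 / real n ^ c)"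

(* support of Setup(1^lambda): distinct lambda-bit primes p, q with p = q = 3 mod 4 *)
definition setup_support :: "nat \<Rightarrow> (nat \<times> nat) set" where
  "setup_support lam = {(p, q). prime p \<and> prime q \<and> p \<noteq> q \<and> p mod 4 = 3 \<and> q mod 4 = 3 \<and>
      2 ^ (lam - 1) \<le> p \<and> p < 2 ^ lam \<and> 2 ^ (lam - 1) \<le> q \<and> q < 2 ^ lam}"

end

theory Submission
  imports Defs "HOL-Real_Asymp.Real_Asymp"
begin

(* In the ring Z_N[x]/(x^2 - s) the polynomial that E builds from (t, g) is t^-1 (t + g x)^2.
   A product of ciphertexts of bits b_i is therefore k w^2 with (k/N) = prod nu(b_i), and
   multiplying a fresh encryption of 0 by k w^2 is the same as encrypting with the transported
   randomness (t, g) |-> k a t^-1 (a, b), where (a, b) = w (t, g).  This transport is a bijection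
   from the accepted randomness for 0 onto the accepted randomness for <v, b>, except on the
   O(N (p + q)) tuples for which a or b is not a unit.  Since there are about N^2/4 accepted
   tuples, the statistical distance is O(1/p + 1/q) = O(2^-lambda). *)

section \<open>Legendre symbols\<close>

lemma Legendre_cases: "Legendre a p \<in> {-1, 0, 1}"
  unfolding Legendre_def by auto

lemma Legendre_cong:
  assumes "[a = b] (mod p)"
  shows "Legendre a p = Legendre b p"
proof -
  have "QuadRes p a \<longleftrightarrow> QuadRes p b"
    unfolding QuadRes_def using assms cong_trans cong_sym by meson
  moreover have "[a = 0] (mod p) \<longleftrightarrow> [b = 0] (mod p)"
    using assms cong_trans cong_sym by meson
  ultimately show ?thesis unfolding Legendre_def by simp
qed

lemma Legendre_eq_0_iff: "Legendre a p = 0 \<longleftrightarrow> p dvd a"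
  unfolding Legendre_def by (auto simp: cong_0_iff)

lemma sign_eq_if_cong:
  fixes x y p :: int
  assumes "x \<in> {-1, 0, 1}" "y \<in> {-1, 0, 1}" "2 < p" "[x = y] (mod p)"
  shows "x = y"
proof (rule ccontr)
  assume "x \<noteq> y"
  moreover have "p dvd x - y" using assms(4) by (simp add: cong_iff_dvd_diff)
  ultimately have "\<bar>p\<bar> \<le> \<bar>x - y\<bar>" using dvd_imp_le_int[of "x - y" p] by simp
  then show False using assms(1-3) by auto
qed

lemma Legendre_mult:
  assumes "prime p" "2 < p"
  shows "Legendre (a * b) (int p) = Legendre a (int p) * Legendre b (int p)"
proof -
  have "[Legendre (a * b) (int p) = (a * b) ^ ((p - 1) div 2)] (mod int p)"
    using euler_criterion assms by blast
  moreover have "[Legendre a (int p) * Legendre b (int p) = a ^ ((p - 1) div 2) * b ^ ((p - 1) div 2)] (mod int p)"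
    using euler_criterion assms cong_mult by blast
  ultimately have "[Legendre (a * b) (int p) = Legendre a (int p) * Legendre b (int p)] (mod int p)"
    by (metis cong_sym cong_trans power_mult_distrib)
  moreover have "Legendre a (int p) * Legendre b (int p) \<in> {-1, 0, 1}"
    using Legendre_cases[of a "int p"] Legendre_cases[of b "int p"] by auto
  ultimately show ?thesis
    using sign_eq_if_cong[OF Legendre_cases, of "Legendre a (int p) * Legendre b (int p)" "int p"] assms
    by simp
qed

lemma Legendre_square:
  assumes "prime (p :: int)" "\<not> p dvd x"
  shows "Legendre (x ^ 2) p = 1"
proof -
  have "\<not> p dvd x ^ 2" using assms by (simp add: prime_dvd_power_iff)
  moreover have "QuadRes p (x ^ 2)" unfolding QuadRes_def by (auto intro: cong_refl)
  ultimately show ?thesis unfolding Legendre_def by (simp add: cong_0_iff)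
qed

lemma Legendre_minus_one:
  assumes "prime p" "p mod 4 = 3"
  shows "Legendre (-1) (int p) = -1"
proof -
  have p: "2 < p" using assms prime_ge_2_nat[of p] by presburger
  have "[Legendre (-1) (int p) = (-1) ^ ((p - 1) div 2)] (mod int p)"
    using euler_criterion assms p by blast
  moreover have "odd ((p - 1) div 2)" using assms by presburger
  ultimately have "[Legendre (-1) (int p) = -1] (mod int p)" by simp
  then show ?thesis using sign_eq_if_cong[OF Legendre_cases, of "-1" "int p"] p by simp
qed


section \<open>Counting solutions of congruences\<close>

lemma finite_int_range_Collect [simp]: "finite {x :: int. 0 \<le> x \<and> x < n \<and> Q x}"
  by (rule finite_subset[of _ "{0..<n}"]) auto

lemma card_residue_class_le:
  fixes P M r :: int
  assumes "0 < P" "0 \<le> M"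
  shows "card {x \<in> {0..<P * M}. [x = r] (mod P)} \<le> nat M"
proof -
  let ?S = "{x \<in> {0..<P * M}. [x = r] (mod P)}"
  have "inj_on (\<lambda>x. x div P) ?S"
  proof (rule inj_onI)
    fix x y assume x: "x \<in> ?S" and y: "y \<in> ?S" and div_eq: "x div P = y div P"
    have "[x = r] (mod P)" "[y = r] (mod P)" using x y by simp_all
    then have "x mod P = y mod P" unfolding Cong.cong_def by simp
    then show "x = y" using div_eq by (metis div_mult_mod_eq)
  qed
  moreover have "(\<lambda>x. x div P) ` ?S \<subseteq> {0..<M}"
  proof
    fix z assume "z \<in> (\<lambda>x. x div P) ` ?S"
    then obtain x where x: "0 \<le> x" "x < P * M" and z: "z = x div P" by auto
    have "x div P * P \<le> x" using div_mult_mod_eq[of x P] pos_mod_sign[of P x] assms by linarith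
    then have "z * P < M * P" unfolding z using x by (simp add: mult.commute)
    then show "z \<in> {0..<M}" unfolding z using assms x by (simp add: pos_imp_zdiv_nonneg_iff mult_less_cancel_right)
  qed
  ultimately have "card ?S \<le> card {0..<M}" using card_inj_on_le by blast
  then show ?thesis by simp
qed

lemma card_linear_roots_le:
  fixes P M c d :: int
  assumes "prime P" "0 \<le> M" "\<not> P dvd c"
  shows "card {x \<in> {0..<P * M}. P dvd c * x + d} \<le> nat M"
proof (cases "\<exists>x0. P dvd c * x0 + d")
  case True
  then obtain x0 where x0: "P dvd c * x0 + d" by blast
  have "{x \<in> {0..<P * M}. P dvd c * x + d} \<subseteq> {x \<in> {0..<P * M}. [x = x0] (mod P)}"
  proof safe
    fix x assume "P dvd c * x + d"
    then have "P dvd (c * x + d) - (c * x0 + d)" using x0 by (rule dvd_diff)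
    then have "P dvd c * (x - x0)" by (simp add: algebra_simps)
    then show "[x = x0] (mod P)" using assms prime_dvd_mult_iff by (auto simp: cong_iff_dvd_diff)
  qed
  then have "card {x \<in> {0..<P * M}. P dvd c * x + d} \<le> card {x \<in> {0..<P * M}. [x = x0] (mod P)}"
    by (intro card_mono) auto
  also have "\<dots> \<le> nat M" using card_residue_class_le assms prime_gt_0_int by blast
  finally show ?thesis .
qed simp

lemma card_Sigma_le:
  assumes "finite A" "\<And>x. x \<in> A \<Longrightarrow> finite (F x)" "\<And>x. x \<in> A \<Longrightarrow> card (F x) \<le> m"
  shows "card (Sigma A F) \<le> card A * m"
proof -
  have "card (Sigma A F) = (\<Sum>x\<in>A. card (F x))" using assms by (simp add: card_SigmaI)
  also have "\<dots> \<le> card A * m" using assms sum_bounded_above[of A "\<lambda>x. card (F x)" m] by simp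
  finally show ?thesis .
qed

lemma card_linear_pair_roots_le:
  fixes P M c1 c2 :: int
  assumes P: "prime P" and M: "0 \<le> M" and c: "\<not> (P dvd c1 \<and> P dvd c2)"
  shows "card {x \<in> {0..<P * M} \<times> {0..<P * M}. P dvd c1 * fst x + c2 * snd x} \<le> nat (P * M) * nat M"
proof -
  let ?I = "{0..<P * M}"
  have Sigma_case: "card {x \<in> ?I \<times> ?I. P dvd d1 * fst x + d2 * snd x} \<le> nat (P * M) * nat M"
    if "\<not> P dvd d2" for d1 d2
  proof -
    have "{x \<in> ?I \<times> ?I. P dvd d1 * fst x + d2 * snd x} \<subseteq> (SIGMA t:?I. {g \<in> ?I. P dvd d2 * g + d1 * t})"
      by (auto simp: add.commute)
    then have "card {x \<in> ?I \<times> ?I. P dvd d1 * fst x + d2 * snd x} \<le> card (SIGMA t:?I. {g \<in> ?I. P dvd d2 * g + d1 * t})"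
      by (rule card_mono[rotated]) simp
    also have "\<dots> \<le> card ?I * nat M"
      by (rule card_Sigma_le) (use card_linear_roots_le[OF P M that] in simp_all)
    finally show ?thesis by simp
  qed
  show ?thesis
  proof (cases "P dvd c2")
    case True
    then have "\<not> P dvd c1" using c by blast
    have "{x \<in> ?I \<times> ?I. P dvd c1 * fst x + c2 * snd x} = prod.swap ` {x \<in> ?I \<times> ?I. P dvd c2 * fst x + c1 * snd x}"
      by (auto simp: add.commute)
    then have "card {x \<in> ?I \<times> ?I. P dvd c1 * fst x + c2 * snd x} \<le> card {x \<in> ?I \<times> ?I. P dvd c2 * fst x + c1 * snd x}"
      by (simp add: card_image_le)
    then show ?thesis using Sigma_case[OF \<open>\<not> P dvd c1\<close>, of c2] le_trans by blast
  qed (rule Sigma_case)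
qed

lemma card_quadratic_roots_le:
  fixes P M s t :: int
  assumes P: "prime P" and M: "0 \<le> M" and s: "\<not> P dvd s"
  shows "card {g \<in> {0..<P * M}. P dvd t ^ 2 - s * g ^ 2} \<le> 2 * nat M"
proof (cases "\<exists>g0. P dvd t ^ 2 - s * g0 ^ 2")
  case True
  then obtain g0 where g0: "P dvd t ^ 2 - s * g0 ^ 2" by blast
  let ?class = "\<lambda>r. {x \<in> {0..<P * M}. [x = r] (mod P)}"
  have "{g \<in> {0..<P * M}. P dvd t ^ 2 - s * g ^ 2} \<subseteq> ?class g0 \<union> ?class (-g0)"
  proof safe
    fix g assume g: "P dvd t ^ 2 - s * g ^ 2" and n: "\<not> [g = - g0] (mod P)"
    have "P dvd s * ((g - g0) * (g + g0))"
      using dvd_diff[OF g0 g] by (simp add: algebra_simps power2_eq_square)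
    then have "P dvd (g - g0) * (g + g0)" using P s prime_dvd_mult_iff by blast
    moreover have "\<not> P dvd g + g0" using n by (simp add: cong_iff_dvd_diff)
    ultimately show "[g = g0] (mod P)" using P prime_dvd_mult_iff by (auto simp: cong_iff_dvd_diff)
  qed
  then have "card {g \<in> {0..<P * M}. P dvd t ^ 2 - s * g ^ 2} \<le> card (?class g0 \<union> ?class (-g0))"
    by (intro card_mono) auto
  also have "\<dots> \<le> card (?class g0) + card (?class (-g0))" by (rule card_Un_le)
  also have "\<dots> \<le> nat M + nat M"
    using card_residue_class_le[of P M] P M prime_gt_0_int by (simp add: add_mono)
  finally show ?thesis by simp
qed simp


section \<open>Blum integers\<close>

lemma coprime_prime_iff:
  fixes P a :: int
  assumes "prime P"
  shows "coprime a P \<longleftrightarrow> \<not> P dvd a"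
proof
  assume "coprime a P"
  then show "\<not> P dvd a" using not_coprimeI[of P a P] not_prime_unit assms by auto
next
  assume "\<not> P dvd a"
  then show "coprime a P" using prime_imp_coprime[OF assms] coprime_commute by blast
qed

locale blum_primes =
  fixes p q :: nat
  assumes prime_p: "prime p" and prime_q: "prime q" and p_neq_q: "p \<noteq> q"
    and p_mod_4: "p mod 4 = 3" and q_mod_4: "q mod 4 = 3"
begin

abbreviation N :: int where "N \<equiv> int (p * q)"

lemma p_gt_2: "2 < p" using prime_p p_mod_4 prime_ge_2_nat[of p] by presburger

lemma q_gt_2: "2 < q" using prime_q q_mod_4 prime_ge_2_nat[of q] by presburger

lemma N_gt_1: "1 < N"
proof -
  have "1 < p * q" using p_gt_2 q_gt_2 one_less_mult[of p q] by (simp add: mult.commute)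
  then show ?thesis by linarith
qed

lemma Jacobi_N: "Jacobi a N = Legendre a (int p) * Legendre a (int q)"
proof -
  have "prime_factorization (p * q) = {#p#} + {#q#}"
    using prime_p prime_q by (simp add: prime_factorization_mult prime_factorization_prime prime_gt_0_nat)
  moreover have "nat N = p * q" by (rule nat_int)
  ultimately show ?thesis unfolding Jacobi_def by simp
qed

lemma Jacobi_mult: "Jacobi (a * b) N = Jacobi a N * Jacobi b N"
  unfolding Jacobi_N using Legendre_mult[OF prime_p p_gt_2] Legendre_mult[OF prime_q q_gt_2] by simp

lemma Jacobi_cong:
  assumes "[a = b] (mod N)"
  shows "Jacobi a N = Jacobi b N"
proof -
  have "[a = b] (mod int p)" using assms by (metis cong_modulus_mult of_nat_mult)
  moreover have "[a = b] (mod int q)" using assms by (metis cong_modulus_mult mult.commute of_nat_mult)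
  ultimately show ?thesis unfolding Jacobi_N using Legendre_cong by metis
qed

lemma coprime_N_iff: "coprime a N \<longleftrightarrow> \<not> int p dvd a \<and> \<not> int q dvd a"
  using coprime_prime_iff[of "int p" a] coprime_prime_iff[of "int q" a] prime_p prime_q by simp

lemma Jacobi_eq_0_iff: "Jacobi a N = 0 \<longleftrightarrow> \<not> coprime a N"
  unfolding Jacobi_N coprime_N_iff by (simp add: Legendre_eq_0_iff)

lemma Jacobi_unit: "coprime a N \<Longrightarrow> Jacobi a N = 1 \<or> Jacobi a N = -1"
  unfolding Jacobi_N coprime_N_iff
  using Legendre_cases[of a "int p"] Legendre_cases[of a "int q"] Legendre_eq_0_iff by auto

lemma Jacobi_square: "coprime x N \<Longrightarrow> Jacobi (x ^ 2) N = 1"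
  unfolding Jacobi_N coprime_N_iff using Legendre_square prime_p prime_q by simp

lemma Jacobi_one: "Jacobi 1 N = 1"
  using Jacobi_square[of 1] by simp

lemma ex_Jacobi_minus_one: "\<exists>z. coprime z N \<and> Jacobi z N = -1"
proof -
  have "coprime (int p) (int q)" using prime_p prime_q p_neq_q by (simp add: primes_coprime)
  then obtain z where z: "[z = -1] (mod int p)" "[z = 1] (mod int q)"
    using binary_chinese_remainder_int by blast
  have "Legendre z (int p) = -1"
    using Legendre_cong[OF z(1)] Legendre_minus_one[OF prime_p p_mod_4] by simp
  moreover have "Legendre 1 (int q) = 1"
    using Legendre_square[of "int q" 1] prime_q q_gt_2 by (simp add: zdvd1_eq)
  then have "Legendre z (int q) = 1" using Legendre_cong[OF z(2)] by simp
  ultimately have "Jacobi z N = -1" unfolding Jacobi_N by simp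
  moreover from this have "coprime z N" using Jacobi_eq_0_iff[of z] by auto
  ultimately show ?thesis by blast
qed

lemma inv_mod_cong:
  assumes "coprime t N"
  shows "[t * inv_mod N t = 1] (mod N)"
proof -
  obtain x where x: "[t * x = 1] (mod N)" using assms cong_solve_coprime_int by blast
  have "[x mod N = x] (mod N)" by (simp add: Cong.cong_def)
  then have "[t * (x mod N) = t * x] (mod N)" by (rule cong_mult[OF cong_refl])
  then have "0 \<le> x mod N \<and> x mod N < N \<and> [t * (x mod N) = 1] (mod N)"
    using x N_gt_1 cong_trans by auto
  then have "0 \<le> inv_mod N t \<and> inv_mod N t < N \<and> [t * inv_mod N t = 1] (mod N)"
    unfolding inv_mod_def by (rule someI)
  then show ?thesis by blast
qed

lemma coprime_inv_mod: "coprime t N \<Longrightarrow> coprime (inv_mod N t) N"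
  using inv_mod_cong cong_imp_coprime cong_sym coprime_1_left coprime_mult_left_iff by metis

lemma Jacobi_inv_mod:
  assumes "coprime t N"
  shows "Jacobi (inv_mod N t) N = Jacobi t N"
proof -
  have "Jacobi t N * Jacobi (inv_mod N t) N = 1"
    using Jacobi_cong[OF inv_mod_cong[OF assms]] Jacobi_mult Jacobi_one by simp
  then show ?thesis using Jacobi_unit[OF assms] by auto
qed

lemma finite_units_mod: "finite (units_mod N)"
  by (rule finite_subset[of _ "{0..<N}"]) (auto simp: units_mod_def)

lemma finite_unitsJ: "finite (unitsJ N \<sigma>)"
  by (rule finite_subset[OF _ finite_units_mod]) (auto simp: unitsJ_def)

lemma card_units_mod_ge: "p * q \<le> card (units_mod N) + p + q"
proof -
  let ?A = "{x \<in> {0..<int p * int q}. [x = 0] (mod int p)}"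
  let ?B = "{x \<in> {0..<int q * int p}. [x = 0] (mod int q)}"
  have "{0..<N} \<subseteq> units_mod N \<union> ?A \<union> ?B"
  proof
    fix x assume x: "x \<in> {0..<N}"
    show "x \<in> units_mod N \<union> ?A \<union> ?B"
    proof (cases "coprime x N")
      case False
      then have "int p dvd x \<or> int q dvd x" using coprime_N_iff by blast
      then show ?thesis using x by (auto simp: cong_0_iff mult.commute)
    qed (use x in \<open>auto simp: units_mod_def\<close>)
  qed
  then have "card {0..<N} \<le> card (units_mod N \<union> ?A \<union> ?B)"
    using finite_units_mod by (intro card_mono) auto
  then have "p * q \<le> card (units_mod N \<union> ?A \<union> ?B)" by (simp del: of_nat_mult)
  also have "\<dots> \<le> card (units_mod N) + card ?A + card ?B"
    by (meson card_Un_le add_le_mono1 le_trans)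
  also have "\<dots> \<le> card (units_mod N) + q + p"
    using card_residue_class_le[of "int p" "int q" 0] card_residue_class_le[of "int q" "int p" 0]
      p_gt_2 q_gt_2 by simp
  finally show ?thesis by simp
qed

lemma card_unitsJ_le_neg: "card (unitsJ N \<sigma>) \<le> card (unitsJ N (- \<sigma>))"
proof -
  obtain z where z: "coprime z N" "Jacobi z N = -1" using ex_Jacobi_minus_one by blast
  let ?f = "\<lambda>x. (z * x) mod N"
  have "inj_on ?f (unitsJ N \<sigma>)"
  proof (rule inj_onI)
    fix x y assume x: "x \<in> unitsJ N \<sigma>" and y: "y \<in> unitsJ N \<sigma>" and "?f x = ?f y"
    then have "[z * x = z * y] (mod N)" by (simp only: Cong.cong_def)
    then have "[x = y] (mod N)" by (rule cong_mult_lcancel[OF z(1), THEN iffD1])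
    then show "x = y" using x y unfolding unitsJ_def units_mod_def Cong.cong_def by auto
  qed
  moreover have "?f ` unitsJ N \<sigma> \<subseteq> unitsJ N (- \<sigma>)"
  proof
    fix y assume "y \<in> ?f ` unitsJ N \<sigma>"
    then obtain x where x: "x \<in> unitsJ N \<sigma>" and y: "y = ?f x" by blast
    have cx: "coprime x N" and jx: "Jacobi x N = \<sigma>" using x unfolding unitsJ_def units_mod_def by auto
    have y_cong: "[y = z * x] (mod N)" unfolding y by (simp add: Cong.cong_def)
    have "coprime y N" using coprime_cong_cong_left[OF y_cong] z cx by simp
    moreover have "Jacobi y N = - \<sigma>" using Jacobi_cong[OF y_cong] Jacobi_mult z jx by simp
    moreover have "0 \<le> y" "y < N" unfolding y using N_gt_1 by auto
    ultimately show "y \<in> unitsJ N (- \<sigma>)" unfolding unitsJ_def units_mod_def by auto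
  qed
  ultimately show ?thesis by (rule card_inj_on_le[OF _ _ finite_unitsJ])
qed

lemma card_unitsJ:
  assumes "\<sigma> = 1 \<or> \<sigma> = -1"
  shows "2 * card (unitsJ N \<sigma>) = card (units_mod N)"
proof -
  have "units_mod N = unitsJ N 1 \<union> unitsJ N (-1)"
    unfolding unitsJ_def units_mod_def using Jacobi_unit by auto
  moreover have "unitsJ N 1 \<inter> unitsJ N (-1) = {}" unfolding unitsJ_def by auto
  ultimately have "card (units_mod N) = card (unitsJ N 1) + card (unitsJ N (-1))"
    using card_Un_disjoint[OF finite_unitsJ finite_unitsJ] by simp
  moreover have "card (unitsJ N 1) = card (unitsJ N (-1))"
    using card_unitsJ_le_neg[of 1] card_unitsJ_le_neg[of "-1"] by simp
  ultimately show ?thesis using assms by auto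
qed

end


section \<open>Arithmetic in \<open>\<int>[x]/(x\<^sup>2 - s)\<close>\<close>

text \<open>\<open>qmul\<close> multiplies in \<open>\<int>[x]/(x\<^sup>2 - s)\<close> without reducing modulo \<open>N\<close>;
  the reduction is done separately by \<open>qmod\<close> and \<open>qcong\<close>.\<close>

definition qmul :: "int \<Rightarrow> int \<times> int \<Rightarrow> int \<times> int \<Rightarrow> int \<times> int" where
  "qmul s x y = (fst x * fst y + s * snd x * snd y, fst x * snd y + snd x * fst y)"

definition qscale :: "int \<Rightarrow> int \<times> int \<Rightarrow> int \<times> int" where
  "qscale l x = (l * fst x, l * snd x)"

definition qnorm :: "int \<Rightarrow> int \<times> int \<Rightarrow> int" where
  "qnorm s x = fst x ^ 2 - s * snd x ^ 2"

definition qmod :: "int \<Rightarrow> int \<times> int \<Rightarrow> int \<times> int" where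
  "qmod N x = (fst x mod N, snd x mod N)"

definition qcong :: "int \<Rightarrow> int \<times> int \<Rightarrow> int \<times> int \<Rightarrow> bool" where
  "qcong N x y \<longleftrightarrow> [fst x = fst y] (mod N) \<and> [snd x = snd y] (mod N)"

lemma qmul_commute: "qmul s x y = qmul s y x"
  unfolding qmul_def by (simp add: algebra_simps)

lemma qmul_assoc: "qmul s (qmul s x y) z = qmul s x (qmul s y z)"
  unfolding qmul_def by (simp add: algebra_simps)

lemma qmul_one: "qmul s (1, 0) x = x"
  unfolding qmul_def by simp

lemma qmul_qscale: "qmul s (qscale l x) (qscale l' y) = qscale (l * l') (qmul s x y)"
  unfolding qmul_def qscale_def by (simp add: algebra_simps)

lemma qscale_qscale: "qscale l (qscale l' x) = qscale (l * l') x"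
  unfolding qscale_def by (simp add: mult.assoc)

lemma qmul_qscale_right: "qmul s x (qscale l y) = qscale l (qmul s x y)"
  unfolding qmul_def qscale_def by (simp add: algebra_simps)

lemma qmul_interchange: "qmul s (qmul s a b) (qmul s c d) = qmul s (qmul s a c) (qmul s b d)"
  unfolding qmul_def by (simp add: algebra_simps)

lemma qmul_qscale_left: "qmul s (qscale l x) y = qscale l (qmul s x y)"
  unfolding qmul_def qscale_def by (simp add: algebra_simps)

lemma qnorm_qmul: "qnorm s (qmul s x y) = qnorm s x * qnorm s y"
  unfolding qnorm_def qmul_def by (simp add: power2_eq_square algebra_simps)

lemma qnorm_qscale: "qnorm s (qscale l x) = l ^ 2 * qnorm s x"
  unfolding qnorm_def qscale_def by (simp add: power2_eq_square algebra_simps)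

lemma dvd_qnormI:
  fixes P :: int
  assumes "P dvd w0" "P dvd s * w1"
  shows "P dvd qnorm s (w0, w1)"
proof -
  have "qnorm s (w0, w1) = w0 * w0 - (s * w1) * w1" unfolding qnorm_def by (simp add: power2_eq_square)
  then show ?thesis using assms by (simp add: dvd_diff dvd_mult2)
qed

lemma qcong_refl: "qcong N x x"
  unfolding qcong_def by simp

lemma qcong_sym: "qcong N x y \<Longrightarrow> qcong N y x"
  unfolding qcong_def by (simp add: cong_sym)

lemma qcong_trans [trans]: "qcong N x y \<Longrightarrow> qcong N y z \<Longrightarrow> qcong N x z"
  unfolding qcong_def using cong_trans by blast

lemma qmod_qmod: "qmod N (qmod N x) = qmod N x"
  unfolding qmod_def by simp

lemma qcong_qmod: "qcong N (qmod N x) x"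
  unfolding qcong_def qmod_def by (simp add: Cong.cong_def)

lemma qmod_eq_iff_qcong: "qmod N x = qmod N y \<longleftrightarrow> qcong N x y"
  unfolding qcong_def qmod_def Cong.cong_def by (simp add: prod_eq_iff)

lemma qmod_eq_if_qcong:
  assumes "qcong N x y" "fst y \<in> {0..<N}" "snd y \<in> {0..<N}"
  shows "qmod N x = y"
  using assms unfolding qcong_def qmod_def Cong.cong_def by (simp add: prod_eq_iff)

lemma qcong_qmul:
  assumes "qcong N x x'" "qcong N y y'"
  shows "qcong N (qmul s x y) (qmul s x' y')"
  using assms unfolding qcong_def qmul_def by (auto intro!: cong_add cong_mult)

lemma qcong_qscale:
  assumes "[l = l'] (mod N)" "qcong N x x'"
  shows "qcong N (qscale l x) (qscale l' x')"
  using assms unfolding qcong_def qscale_def by (auto intro!: cong_mult)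

lemma qnorm_cong: "qcong N x y \<Longrightarrow> [qnorm s x = qnorm s y] (mod N)"
  unfolding qcong_def qnorm_def by (auto intro!: cong_diff cong_mult cong_pow)

lemma pmul_eq_qmod: "pmul N s c e = qmod N (qmul s c e)"
  unfolding pmul_def qmod_def qmul_def by simp

definition coeffs_coprime :: "int \<Rightarrow> int \<times> int \<Rightarrow> bool" where
  "coeffs_coprime N x \<longleftrightarrow> coprime (fst x) N \<and> coprime (snd x) N"

lemma coeffs_coprime_qcong: "qcong N x y \<Longrightarrow> coeffs_coprime N x \<longleftrightarrow> coeffs_coprime N y"
  unfolding qcong_def coeffs_coprime_def using coprime_cong_cong_left by blast

lemma coeffs_coprime_qscale:
  "coprime l N \<Longrightarrow> coeffs_coprime N x \<Longrightarrow> coeffs_coprime N (qscale l x)"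
  unfolding coeffs_coprime_def qscale_def by simp


section \<open>The sampler \<open>E\<close>\<close>

definition E_poly :: "int \<Rightarrow> int \<Rightarrow> int \<times> int \<Rightarrow> int \<times> int" where
  "E_poly N s u = qmod N (fst u + s * snd u ^ 2 * inv_mod N (fst u), 2 * snd u)"

definition accepted :: "int \<Rightarrow> int \<Rightarrow> int \<Rightarrow> (int \<times> int) set" where
  "accepted N s \<sigma> = {u. fst u \<in> unitsJ N \<sigma> \<and> snd u \<in> units_mod N \<and> GT N s (E_poly N s u) = 1}"

lemma E_cand_eq: "E_cand N a (t1, t2, g1, g2) = (E_poly N a (t1, g1), E_poly N (-a) (t2, g2))"
  unfolding E_cand_def E_poly_def qmod_def by simp

definition interleave :: "(int \<times> int) \<times> (int \<times> int) \<Rightarrow> int \<times> int \<times> int \<times> int" where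
  "interleave x = (fst (fst x), fst (snd x), snd (fst x), snd (snd x))"

lemma inj_interleave: "inj interleave"
  unfolding interleave_def by (rule injI) (auto simp: prod_eq_iff)

lemma E_acc_eq: "E_acc N a b = interleave ` (accepted N a (nu b) \<times> accepted N (-a) (nu b))"
proof -
  have "x \<in> E_acc N a b \<longleftrightarrow> x \<in> interleave ` (accepted N a (nu b) \<times> accepted N (-a) (nu b))" for x
  proof -
    obtain t1 t2 g1 g2 where x: "x = (t1, t2, g1, g2)" by (cases x) auto
    have "x = interleave ((t1, g1), (t2, g2))" unfolding x interleave_def by simp
    moreover have "x \<in> E_acc N a b \<longleftrightarrow> ((t1, g1), (t2, g2)) \<in> accepted N a (nu b) \<times> accepted N (-a) (nu b)"
      unfolding x E_acc_def accepted_def by (auto simp: E_cand_eq)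
    ultimately show ?thesis by (simp add: inj_image_mem_iff[OF inj_interleave])
  qed
  then show ?thesis by blast
qed

context blum_primes
begin

lemma E_poly_cong:
  assumes "coprime (fst u) N"
  shows "qcong N (E_poly N s u) (qscale (inv_mod N (fst u)) (qmul s u u))"
proof -
  obtain t g where u: "u = (t, g)" by (cases u)
  have t: "[t * inv_mod N t = 1] (mod N)" using inv_mod_cong assms u by simp
  have "[t + s * g ^ 2 * inv_mod N t = inv_mod N t * (t * t + s * g * g)] (mod N)"
    using t unfolding cong_iff_dvd_diff dvd_def by Groebner_Basis.algebra
  moreover have "[2 * g = inv_mod N t * (t * g + g * t)] (mod N)"
    using t unfolding cong_iff_dvd_diff dvd_def by Groebner_Basis.algebra
  ultimately have "qcong N (t + s * g ^ 2 * inv_mod N t, 2 * g) (qscale (inv_mod N t) (qmul s (t, g) (t, g)))"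
    unfolding qcong_def qscale_def qmul_def by simp
  then show ?thesis unfolding E_poly_def u using qcong_trans[OF qcong_qmod] by simp
qed

lemma GT_E_poly_iff:
  assumes "coprime (fst u) N"
  shows "GT N s (E_poly N s u) = 1 \<longleftrightarrow> coprime (qnorm s u) N"
proof -
  let ?t' = "inv_mod N (fst u)"
  have "GT N s (E_poly N s u) = Jacobi (qnorm s (E_poly N s u)) N"
    unfolding GT_def qnorm_def by (simp add: mult.commute)
  also have "\<dots> = Jacobi ((?t' * qnorm s u) ^ 2) N"
    using Jacobi_cong[OF qnorm_cong[OF E_poly_cong[OF assms]]]
    by (simp add: qnorm_qscale qnorm_qmul power2_eq_square algebra_simps)
  also have "\<dots> = 1 \<longleftrightarrow> coprime (?t' * qnorm s u) N"
    using Jacobi_square[of "?t' * qnorm s u"] Jacobi_eq_0_iff[of "(?t' * qnorm s u) ^ 2"] by auto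
  finally show ?thesis using coprime_inv_mod[OF assms] by simp
qed

lemma accepted_iff:
  "u \<in> accepted N s \<sigma> \<longleftrightarrow> fst u \<in> unitsJ N \<sigma> \<and> snd u \<in> units_mod N \<and> coprime (qnorm s u) N"
proof -
  have "GT N s (E_poly N s u) = 1 \<longleftrightarrow> coprime (qnorm s u) N" if "fst u \<in> unitsJ N \<sigma>"
    using that GT_E_poly_iff unfolding unitsJ_def units_mod_def by blast
  then show ?thesis unfolding accepted_def by blast
qed

lemma acceptedD:
  assumes "u \<in> accepted N s \<sigma>"
  shows "fst u \<in> {0..<N}" "snd u \<in> {0..<N}" "coprime (fst u) N" "coprime (snd u) N"
    "Jacobi (fst u) N = \<sigma>" "coprime (qnorm s u) N"
  using assms unfolding accepted_iff unitsJ_def units_mod_def by auto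

lemma finite_accepted: "finite (accepted N s \<sigma>)"
proof (rule finite_subset)
  show "accepted N s \<sigma> \<subseteq> {0..<N} \<times> {0..<N}"
  proof
    fix u assume "u \<in> accepted N s \<sigma>"
    then show "u \<in> {0..<N} \<times> {0..<N}" using acceptedD(1,2)[of u] by (simp add: mem_Times_iff)
  qed
qed simp

lemma card_accepted_ge:
  assumes s: "coprime s N" and \<sigma>: "\<sigma> = 1 \<or> \<sigma> = -1"
  shows "card (units_mod N) div 2 * (card (units_mod N) - 2 * (p + q)) \<le> card (accepted N s \<sigma>)"
proof -
  define B where "B t = {g \<in> {0..<int p * int q}. int p dvd t ^ 2 - s * g ^ 2} \<union>
                        {g \<in> {0..<int q * int p}. int q dvd t ^ 2 - s * g ^ 2}" for t
  have card_B: "card (B t) \<le> 2 * (p + q)" for t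
  proof -
    have "card (B t) \<le> card {g \<in> {0..<int p * int q}. int p dvd t ^ 2 - s * g ^ 2} +
                         card {g \<in> {0..<int q * int p}. int q dvd t ^ 2 - s * g ^ 2}"
      unfolding B_def by (rule card_Un_le)
    also have "\<dots> \<le> 2 * nat (int q) + 2 * nat (int p)"
      using card_quadratic_roots_le[of "int p" "int q" s t] card_quadratic_roots_le[of "int q" "int p" s t]
        s prime_p prime_q unfolding coprime_N_iff by (intro add_mono) auto
    finally show ?thesis by simp
  qed
  have "(SIGMA t:unitsJ N \<sigma>. units_mod N - B t) \<subseteq> accepted N s \<sigma>"
  proof safe
    fix t g assume t: "t \<in> unitsJ N \<sigma>" and g: "g \<in> units_mod N" and g_B: "g \<notin> B t"
    have "0 \<le> g" "g < N" using g unfolding units_mod_def by auto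
    then have "\<not> int p dvd t ^ 2 - s * g ^ 2" "\<not> int q dvd t ^ 2 - s * g ^ 2"
      using g_B unfolding B_def by (auto simp: mult.commute)
    then have "coprime (qnorm s (t, g)) N" unfolding qnorm_def coprime_N_iff by simp
    then show "(t, g) \<in> accepted N s \<sigma>" using t g unfolding accepted_iff by simp
  qed
  then have "card (SIGMA t:unitsJ N \<sigma>. units_mod N - B t) \<le> card (accepted N s \<sigma>)"
    using card_mono finite_accepted by blast
  moreover have "card (unitsJ N \<sigma>) * (card (units_mod N) - 2 * (p + q)) \<le>
      card (SIGMA t:unitsJ N \<sigma>. units_mod N - B t)"
  proof -
    have "card (units_mod N) - 2 * (p + q) \<le> card (units_mod N - B t)" for t
      using diff_card_le_card_Diff[of "B t" "units_mod N"] card_B[of t] unfolding B_def by simp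
    then have "card (unitsJ N \<sigma>) * (card (units_mod N) - 2 * (p + q)) \<le>
        (\<Sum>t\<in>unitsJ N \<sigma>. card (units_mod N - B t))"
      using sum_bounded_below[of "unitsJ N \<sigma>" "card (units_mod N) - 2 * (p + q)"] by simp
    also have "\<dots> = card (SIGMA t:unitsJ N \<sigma>. units_mod N - B t)"
      using finite_unitsJ finite_units_mod by (simp add: card_SigmaI)
    finally show ?thesis .
  qed
  moreover have "card (unitsJ N \<sigma>) = card (units_mod N) div 2" using card_unitsJ[OF \<sigma>] by simp
  ultimately show ?thesis by simp
qed

(* p + q - P is the other prime factor of N *)
lemma card_linear_form_roots_le:
  assumes P: "P = p \<or> P = q" and c: "\<not> (int P dvd c1 \<and> int P dvd c2)"
  shows "card {x \<in> {0..<N} \<times> {0..<N}. int P dvd c1 * fst x + c2 * snd x} \<le> p * q * (p + q - P)"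
  using P
proof
  assume "P = p"
  then show ?thesis
    using card_linear_pair_roots_le[of "int p" "int q" c1 c2] prime_p c by (simp add: nat_mult_distrib)
next
  assume "P = q"
  then show ?thesis
    using card_linear_pair_roots_le[of "int q" "int p" c1 c2] prime_q c
    by (simp add: nat_mult_distrib mult.commute)
qed

lemma card_not_coeffs_coprime_le:
  assumes w: "coprime (qnorm s w) N"
  shows "card {u \<in> accepted N s \<sigma>. \<not> coeffs_coprime N (qmul s w u)} \<le> 2 * (p * q) * (p + q)"
proof -
  obtain w0 w1 where w_eq: "w = (w0, w1)" by (cases w)
  define L where "L P c1 c2 = {x \<in> {0..<N} \<times> {0..<N}. int P dvd c1 * fst x + c2 * snd x}" for P c1 c2
  have card_L: "card (L P w0 (s * w1)) \<le> p * q * (p + q - P)" "card (L P w1 w0) \<le> p * q * (p + q - P)"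
    if P: "P = p \<or> P = q" for P
  proof -
    have "\<not> int P dvd qnorm s w" using w P unfolding coprime_N_iff by auto
    then have "\<not> (int P dvd w0 \<and> int P dvd s * w1)" "\<not> (int P dvd w1 \<and> int P dvd w0)"
      unfolding w_eq using dvd_qnormI[of "int P" w0 s w1] dvd_mult[of "int P" w1 s] by blast+
    then show "card (L P w0 (s * w1)) \<le> p * q * (p + q - P)" "card (L P w1 w0) \<le> p * q * (p + q - P)"
      unfolding L_def using card_linear_form_roots_le[OF P] by blast+
  qed
  have "{u \<in> accepted N s \<sigma>. \<not> coeffs_coprime N (qmul s w u)} \<subseteq>
      (L p w0 (s * w1) \<union> L q w0 (s * w1)) \<union> (L p w1 w0 \<union> L q w1 w0)"
  proof
    fix u assume u: "u \<in> {u \<in> accepted N s \<sigma>. \<not> coeffs_coprime N (qmul s w u)}"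
    then have range: "u \<in> {0..<N} \<times> {0..<N}" using acceptedD(1,2)[of u] by (auto simp: mem_Times_iff)
    have "\<not> coprime (w0 * fst u + s * w1 * snd u) N \<or> \<not> coprime (w1 * fst u + w0 * snd u) N"
      using u unfolding coeffs_coprime_def w_eq qmul_def by (auto simp: add.commute)
    then show "u \<in> (L p w0 (s * w1) \<union> L q w0 (s * w1)) \<union> (L p w1 w0 \<union> L q w1 w0)"
      using range unfolding L_def coprime_N_iff by auto
  qed
  moreover have "finite (L P c1 c2)" for P c1 c2
    by (rule finite_subset[of _ "{0..<N} \<times> {0..<N}"]) (auto simp: L_def)
  ultimately have "card {u \<in> accepted N s \<sigma>. \<not> coeffs_coprime N (qmul s w u)} \<le>
      card ((L p w0 (s * w1) \<union> L q w0 (s * w1)) \<union> (L p w1 w0 \<union> L q w1 w0))"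
    by (intro card_mono) simp_all
  also have "\<dots> \<le> card (L p w0 (s * w1)) + card (L q w0 (s * w1)) + (card (L p w1 w0) + card (L q w1 w0))"
    by (meson card_Un_le add_mono le_trans)
  also have "\<dots> \<le> p * q * q + p * q * p + (p * q * q + p * q * p)"
    using card_L[of p] card_L[of q] by (intro add_mono) simp_all
  finally show ?thesis by (simp add: algebra_simps)
qed

end


section \<open>Transporting randomness\<close>

text \<open>The scale \<open>k a t\<^sup>-\<^sup>1\<close>, with \<open>(a, b) = w u\<close>, is chosen so that \<open>E_poly\<close> of the transported
  pair is \<open>k w\<^sup>2\<close> times \<open>E_poly u\<close> (lemma \<open>E_poly_transport\<close>).\<close>

definition transport_scale :: "int \<Rightarrow> int \<Rightarrow> int \<times> int \<Rightarrow> int \<Rightarrow> int \<times> int \<Rightarrow> int" where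
  "transport_scale N s w k u = k * fst (qmul s w u) * inv_mod N (fst u)"

definition transport :: "int \<Rightarrow> int \<Rightarrow> int \<times> int \<Rightarrow> int \<Rightarrow> int \<times> int \<Rightarrow> int \<times> int" where
  "transport N s w k u = qmod N (qscale (transport_scale N s w k u) (qmul s w u))"

definition qinv :: "int \<Rightarrow> int \<Rightarrow> int \<times> int \<Rightarrow> int \<times> int" where
  "qinv N s w = qscale (inv_mod N (qnorm s w)) (fst w, - snd w)"

context blum_primes
begin

lemma qinv_qmul:
  assumes "coprime (qnorm s w) N"
  shows "qcong N (qmul s (qinv N s w) w) (1, 0)"
proof -
  have "qmul s (qinv N s w) w = qscale (inv_mod N (qnorm s w)) (qnorm s w, 0)"
    unfolding qinv_def qmul_qscale_left by (simp add: qmul_def qnorm_def power2_eq_square algebra_simps)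
  also have "qcong N \<dots> (1, 0)"
    using inv_mod_cong[OF assms] unfolding qcong_def qscale_def by (simp add: mult.commute)
  finally show ?thesis .
qed

lemma coprime_qnorm_qinv: "coprime (qnorm s w) N \<Longrightarrow> coprime (qnorm s (qinv N s w)) N"
  unfolding qinv_def qnorm_qscale using coprime_inv_mod by (simp add: qnorm_def)

context
  fixes s k \<sigma> :: int and w u :: "int \<times> int"
  assumes k_unit: "coprime k N" and w_unit: "coprime (qnorm s w) N"
    and u_acc: "u \<in> accepted N s \<sigma>" and wu_units: "coeffs_coprime N (qmul s w u)"
begin

lemma coprime_transport_scale: "coprime (transport_scale N s w k u) N"
  using k_unit wu_units coprime_inv_mod[OF acceptedD(3)[OF u_acc]]
  unfolding transport_scale_def coeffs_coprime_def by simp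

lemma transport_scale_fst: "[transport_scale N s w k u * fst u = k * fst (qmul s w u)] (mod N)"
proof -
  have "[fst u * inv_mod N (fst u) = 1] (mod N)" using inv_mod_cong acceptedD(3)[OF u_acc] by blast
  then show ?thesis unfolding transport_scale_def cong_iff_dvd_diff dvd_def by Groebner_Basis.algebra
qed

lemma transport_qcong: "qcong N (transport N s w k u) (qscale (transport_scale N s w k u) (qmul s w u))"
  unfolding transport_def by (rule qcong_qmod)

lemma fst_transport_cong: "[fst (transport N s w k u) = transport_scale N s w k u * fst (qmul s w u)] (mod N)"
  using transport_qcong unfolding qcong_def qscale_def by simp

lemma transport_mem_accepted: "transport N s w k u \<in> accepted N s (Jacobi k N * \<sigma>)"
proof -
  let ?l = "transport_scale N s w k u" and ?v = "transport N s w k u"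
  have "coeffs_coprime N ?v"
    using coeffs_coprime_qcong[OF transport_qcong] coeffs_coprime_qscale[OF coprime_transport_scale wu_units]
    by blast
  moreover have "Jacobi (fst ?v) N = Jacobi k N * \<sigma>"
  proof -
    have "Jacobi (fst ?v) N = Jacobi k N * Jacobi (fst (qmul s w u) ^ 2) N * Jacobi (inv_mod N (fst u)) N"
      using Jacobi_cong[OF fst_transport_cong] Jacobi_mult
      unfolding transport_scale_def by (simp add: power2_eq_square mult.assoc mult.left_commute)
    also have "\<dots> = Jacobi k N * \<sigma>"
      using Jacobi_square Jacobi_inv_mod wu_units acceptedD(3,5)[OF u_acc]
      unfolding coeffs_coprime_def by simp
    finally show ?thesis .
  qed
  moreover have "coprime (qnorm s ?v) N"
  proof -
    have "[qnorm s ?v = ?l ^ 2 * (qnorm s w * qnorm s u)] (mod N)"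
      using qnorm_cong[OF transport_qcong, of s] by (simp add: qnorm_qscale qnorm_qmul)
    moreover have "coprime (?l ^ 2 * (qnorm s w * qnorm s u)) N"
      using coprime_transport_scale w_unit acceptedD(6)[OF u_acc] by simp
    ultimately show ?thesis using coprime_cong_cong_left by blast
  qed
  moreover have "fst ?v \<in> {0..<N}" "snd ?v \<in> {0..<N}"
    using N_gt_1 unfolding transport_def qmod_def by auto
  ultimately show ?thesis
    unfolding accepted_iff unitsJ_def units_mod_def coeffs_coprime_def by simp
qed

lemma qmul_transport_qcong:
  assumes "qcong N (qmul s W w) (1, 0)"
  shows "qcong N (qmul s W (transport N s w k u)) (qscale (transport_scale N s w k u) u)"
proof -
  have "qcong N (qmul s W (transport N s w k u)) (qmul s W (qscale (transport_scale N s w k u) (qmul s w u)))"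
    by (rule qcong_qmul[OF qcong_refl transport_qcong])
  also have "\<dots> = qscale (transport_scale N s w k u) (qmul s (qmul s W w) u)"
    by (simp add: qmul_qscale_right qmul_assoc)
  also have "qcong N \<dots> (qscale (transport_scale N s w k u) (qmul s (1, 0) u))"
    by (rule qcong_qscale[OF cong_refl qcong_qmul[OF assms qcong_refl]])
  finally show ?thesis by (simp add: qmul_one)
qed

lemma transport_coeffs_coprime:
  assumes "qcong N (qmul s W w) (1, 0)"
  shows "coeffs_coprime N (qmul s W (transport N s w k u))"
proof -
  have "coeffs_coprime N u" using acceptedD(3,4)[OF u_acc] unfolding coeffs_coprime_def by simp
  then show ?thesis
    using coeffs_coprime_qcong[OF qmul_transport_qcong[OF assms]]
      coeffs_coprime_qscale[OF coprime_transport_scale] by blast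
qed

lemma transport_inverse:
  assumes Ww: "qcong N (qmul s W w) (1, 0)" and kk': "[k' * k = 1] (mod N)"
  shows "transport N s W k' (transport N s w k u) = u"
proof -
  let ?l = "transport_scale N s w k u" and ?v = "transport N s w k u"
  let ?l' = "transport_scale N s W k' ?v"
  have fst_Wv: "[fst (qmul s W ?v) = ?l * fst u] (mod N)"
    using qmul_transport_qcong[OF Ww] unfolding qcong_def qscale_def by simp
  have v_inv: "[fst ?v * inv_mod N (fst ?v) = 1] (mod N)"
    using inv_mod_cong acceptedD(3)[OF transport_mem_accepted] by blast
  have scale: "[?l' * ?l = 1] (mod N)"
    using fst_transport_cong fst_Wv v_inv transport_scale_fst kk'
    unfolding transport_scale_def[of N s W] cong_iff_dvd_diff dvd_def by Groebner_Basis.algebra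
  have "qcong N (qscale ?l' (qmul s W ?v)) (qscale ?l' (qscale ?l u))"
    by (rule qcong_qscale[OF cong_refl qmul_transport_qcong[OF Ww]])
  also have "\<dots> = qscale (?l' * ?l) u" by (rule qscale_qscale)
  also have "qcong N \<dots> (qscale 1 u)" by (rule qcong_qscale[OF scale qcong_refl])
  finally have "qcong N (qscale ?l' (qmul s W ?v)) u" by (simp add: qscale_def)
  then show ?thesis
    unfolding transport_def[of N s W] by (rule qmod_eq_if_qcong) (use acceptedD(1,2)[OF u_acc] in simp_all)
qed

lemma E_poly_transport:
  assumes c: "qcong N c (qscale k (qmul s w w))"
  shows "E_poly N s (transport N s w k u) = pmul N s c (E_poly N s u)"
proof -
  let ?l = "transport_scale N s w k u" and ?v = "transport N s w k u"
  let ?wu = "qmul s w u" and ?t' = "inv_mod N (fst u)" and ?v' = "inv_mod N (fst ?v)"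
  have v_inv: "[fst ?v * ?v' = 1] (mod N)"
    using inv_mod_cong acceptedD(3)[OF transport_mem_accepted] by blast
  have u_inv: "[fst u * ?t' = 1] (mod N)" using inv_mod_cong acceptedD(3)[OF u_acc] by blast
  have scale: "[?v' * (?l * ?l) = k * ?t'] (mod N)"
    using fst_transport_cong v_inv u_inv transport_scale_fst
    unfolding cong_iff_dvd_diff dvd_def by Groebner_Basis.algebra
  have "qcong N (E_poly N s ?v) (qscale ?v' (qmul s ?v ?v))"
    by (rule E_poly_cong[OF acceptedD(3)[OF transport_mem_accepted]])
  also have "qcong N \<dots> (qscale ?v' (qmul s (qscale ?l ?wu) (qscale ?l ?wu)))"
    by (rule qcong_qscale[OF cong_refl qcong_qmul[OF transport_qcong transport_qcong]])
  also have "\<dots> = qscale (?v' * (?l * ?l)) (qmul s ?wu ?wu)"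
    by (simp add: qmul_qscale qscale_qscale)
  also have "qcong N \<dots> (qscale (k * ?t') (qmul s ?wu ?wu))"
    by (rule qcong_qscale[OF scale qcong_refl])
  also have "\<dots> = qmul s (qscale k (qmul s w w)) (qscale ?t' (qmul s u u))"
    by (simp add: qmul_qscale qmul_interchange)
  also have "qcong N \<dots> (qmul s c (E_poly N s u))"
    by (rule qcong_qmul[OF qcong_sym[OF c] qcong_sym[OF E_poly_cong[OF acceptedD(3)[OF u_acc]]]])
  finally have "qmod N (E_poly N s ?v) = pmul N s c (E_poly N s u)"
    unfolding pmul_eq_qmod qmod_eq_iff_qcong .
  then show ?thesis by (simp add: E_poly_def qmod_qmod)
qed

end

lemma transport_bij:
  assumes k: "coprime k N" and w: "coprime (qnorm s w) N" and W: "coprime (qnorm s W) N"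
    and Ww: "qcong N (qmul s W w) (1, 0)" and \<sigma>: "\<sigma> = 1 \<or> \<sigma> = -1"
  shows "bij_betw (transport N s w k) {u \<in> accepted N s \<sigma>. coeffs_coprime N (qmul s w u)}
           {v \<in> accepted N s (Jacobi k N * \<sigma>). coeffs_coprime N (qmul s W v)}"
proof (rule bij_betw_byWitness[where f' = "transport N s W (inv_mod N k)"])
  let ?k' = "inv_mod N k"
  have k': "coprime ?k' N" "[?k' * k = 1] (mod N)" "[k * ?k' = 1] (mod N)"
    using coprime_inv_mod[OF k] inv_mod_cong[OF k] by (simp_all add: mult.commute)
  have wW: "qcong N (qmul s w W) (1, 0)" using Ww by (simp add: qmul_commute)
  have \<sigma>': "Jacobi ?k' N * (Jacobi k N * \<sigma>) = \<sigma>"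
    using Jacobi_inv_mod[OF k] Jacobi_unit[OF k] by auto
  show "\<forall>u \<in> {u \<in> accepted N s \<sigma>. coeffs_coprime N (qmul s w u)}. transport N s W ?k' (transport N s w k u) = u"
    using transport_inverse[OF k w _ _ Ww k'(2)] by blast
  show "\<forall>v \<in> {v \<in> accepted N s (Jacobi k N * \<sigma>). coeffs_coprime N (qmul s W v)}.
      transport N s w k (transport N s W ?k' v) = v"
    using transport_inverse[OF k'(1) W _ _ wW k'(3)] by blast
  show "transport N s w k ` {u \<in> accepted N s \<sigma>. coeffs_coprime N (qmul s w u)} \<subseteq>
      {v \<in> accepted N s (Jacobi k N * \<sigma>). coeffs_coprime N (qmul s W v)}"
    using transport_mem_accepted[OF k w] transport_coeffs_coprime[OF k w _ _ Ww] by blast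
  have "transport N s W ?k' v \<in> accepted N s \<sigma> \<and> coeffs_coprime N (qmul s w (transport N s W ?k' v))"
    if "v \<in> accepted N s (Jacobi k N * \<sigma>)" "coeffs_coprime N (qmul s W v)" for v
    using transport_mem_accepted[OF k'(1) W that, unfolded \<sigma>'] transport_coeffs_coprime[OF k'(1) W that wW]
    by simp
  then show "transport N s W ?k' ` {v \<in> accepted N s (Jacobi k N * \<sigma>). coeffs_coprime N (qmul s W v)} \<subseteq>
      {u \<in> accepted N s \<sigma>. coeffs_coprime N (qmul s w u)}" by blast
qed

end


section \<open>Products of ciphertext polynomials\<close>

definition scaled_square :: "int \<Rightarrow> int \<Rightarrow> int \<times> int \<Rightarrow> int \<Rightarrow> int \<times> int \<Rightarrow> bool" where
  "scaled_square N s c k w \<longleftrightarrow> coprime k N \<and> coprime (qnorm s w) N \<and> qcong N c (qscale k (qmul s w w))"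

context blum_primes
begin

lemma scaled_square_pmul_E_poly:
  assumes c: "scaled_square N s c k w" and u: "u \<in> accepted N s \<sigma>"
  shows "scaled_square N s (pmul N s c (E_poly N s u)) (k * inv_mod N (fst u)) (qmul s w u)"
proof -
  let ?t' = "inv_mod N (fst u)"
  have "qcong N (pmul N s c (E_poly N s u)) (qmul s c (E_poly N s u))"
    unfolding pmul_eq_qmod by (rule qcong_qmod)
  also have "qcong N \<dots> (qmul s (qscale k (qmul s w w)) (qscale ?t' (qmul s u u)))"
    using c E_poly_cong[OF acceptedD(3)[OF u]] unfolding scaled_square_def by (blast intro: qcong_qmul)
  also have "\<dots> = qscale (k * ?t') (qmul s (qmul s w u) (qmul s w u))"
    by (simp add: qmul_qscale qmul_interchange)
  finally show ?thesis
    using c coprime_inv_mod acceptedD(3,6)[OF u]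
    unfolding scaled_square_def by (simp add: qnorm_qmul)
qed

lemma scaled_square_fold:
  assumes "\<And>i. i \<in> set xs \<Longrightarrow> \<exists>u \<in> accepted N s (\<sigma> i). sel i = E_poly N s u"
    and "scaled_square N s c k w"
  shows "\<exists>k' w'. scaled_square N s (fold (\<lambda>i acc. pmul N s acc (sel i)) xs c) k' w' \<and>
           Jacobi k' N = Jacobi k N * prod_list (map \<sigma> xs)"
  using assms
proof (induction xs arbitrary: c k w)
  case (Cons i xs)
  obtain u where u: "u \<in> accepted N s (\<sigma> i)" "sel i = E_poly N s u" using Cons.prems(1)[of i] by auto
  let ?k = "k * inv_mod N (fst u)"
  have step: "scaled_square N s (pmul N s c (sel i)) ?k (qmul s w u)"
    using scaled_square_pmul_E_poly[OF Cons.prems(2) u(1)] u(2) by simp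
  have "\<exists>u \<in> accepted N s (\<sigma> j). sel j = E_poly N s u" if "j \<in> set xs" for j
    using Cons.prems(1) that by simp
  from Cons.IH[OF this step] obtain k' w'
    where "scaled_square N s (fold (\<lambda>i acc. pmul N s acc (sel i)) xs (pmul N s c (sel i))) k' w'"
      and "Jacobi k' N = Jacobi ?k N * prod_list (map \<sigma> xs)" by blast
  moreover have "Jacobi ?k N = Jacobi k N * \<sigma> i"
    using Jacobi_mult Jacobi_inv_mod acceptedD(3,5)[OF u(1)] by simp
  ultimately have "scaled_square N s (fold (\<lambda>i acc. pmul N s acc (sel i)) (i # xs) c) k' w' \<and>
      Jacobi k' N = Jacobi k N * prod_list (map \<sigma> (i # xs))" by (simp add: mult.assoc)
  then show ?case by blast
qed auto

lemma fold_pmul_E_poly_scaled_square: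
  assumes "\<And>i. i \<in> set xs \<Longrightarrow> \<exists>u \<in> accepted N s (\<sigma> i). sel i = E_poly N s u"
  shows "\<exists>k w. scaled_square N s (fold (\<lambda>i acc. pmul N s acc (sel i)) xs (1, 0)) k w \<and>
           Jacobi k N = prod_list (map \<sigma> xs)"
proof -
  have "scaled_square N s (1, 0) 1 (1, 0)"
    unfolding scaled_square_def qnorm_def by (simp add: qcong_refl qmul_one qscale_def)
  from scaled_square_fold[where xs = xs and \<sigma> = \<sigma> and sel = sel, OF assms this]
  show ?thesis unfolding Jacobi_one mult_1 .
qed

end

lemma nu_ip2:
  assumes "length bs = length v"
  shows "prod_list (map (\<lambda>i. nu (bs ! i)) (filter (\<lambda>i. v ! i) [0..<length v])) = nu (ip2 v bs)"
proof -
  have "prod_list (map (\<lambda>i. nu (bs ! i)) (filter (\<lambda>i. v ! i) [0..<n])) =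
        nu (odd (\<Sum>i<n. (if v ! i \<and> bs ! i then 1 else 0 :: nat)))" for n
  proof (induction n)
    case (Suc n)
    then show ?case by (cases "v ! n"; cases "bs ! n") (auto simp: nu_def)
  qed (simp add: nu_def)
  then show ?thesis unfolding ip2_def by simp
qed

lemma Eval_eq:
  assumes "cts \<noteq> []" "\<forall>ct \<in> set cts. snd (snd ct) = a"
  shows "Eval N v cts = map_pmf (\<lambda>(cz, dz). Some (
      pmul N a (fold (\<lambda>i acc. pmul N a acc (fst (cts ! i))) (filter ((!) v) [0..<length cts]) (1, 0)) cz,
      pmul N (-a) (fold (\<lambda>i acc. pmul N (-a) acc (fst (snd (cts ! i)))) (filter ((!) v) [0..<length cts]) (1, 0)) dz,
      a)) (E N a False)"
  using assms unfolding Eval_def Let_def by (simp add: hd_in_set)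


section \<open>Statistical distance\<close>

lemma SD_le:
  assumes "\<And>S. \<bar>measure_pmf.prob P S - measure_pmf.prob Q S\<bar> \<le> b"
  shows "SD P Q \<le> b"
  unfolding SD_def by (rule cSUP_least) (use assms in auto)

lemma SD_le_1: "SD P Q \<le> 1"
proof (rule SD_le)
  fix S
  have "0 \<le> measure_pmf.prob P S" "measure_pmf.prob P S \<le> 1"
    "0 \<le> measure_pmf.prob Q S" "measure_pmf.prob Q S \<le> 1" by simp_all
  then show "\<bar>measure_pmf.prob P S - measure_pmf.prob Q S\<bar> \<le> 1" by linarith
qed

lemma abs_ratio_shift_le:
  fixes n k e d :: real
  assumes "0 < n" "0 \<le> k" "k \<le> n" "0 \<le> e" "e \<le> d"
  shows "\<bar>(k + e) / (n + d) - k / n\<bar> \<le> d / (n + d)"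
proof -
  have nd: "0 < n + d" using assms by linarith
  have "n * e \<le> n * d" "k * d \<le> n * d" "0 \<le> n * e" "0 \<le> k * d"
    using assms by (simp_all add: mult_left_mono mult_right_mono)
  then have "\<bar>n * e - k * d\<bar> \<le> n * d" by linarith
  then have "\<bar>n * e - k * d\<bar> / (n * (n + d)) \<le> (n * d) / (n * (n + d))"
    using assms nd by (intro divide_right_mono) simp_all
  also have "\<dots> = d / (n + d)" using assms by simp
  also have "\<bar>n * e - k * d\<bar> / (n * (n + d)) = \<bar>(k + e) / (n + d) - k / n\<bar>"
    using assms nd by (simp add: field_simps abs_divide abs_mult)
  finally show ?thesis .
qed

lemma abs_ratio_shift_diff_le:
  fixes n k e1 d1 e2 d2 :: real
  assumes "0 \<le> k" "k \<le> n" "0 \<le> e1" "e1 \<le> d1" "0 \<le> e2" "e2 \<le> d2" "0 < n + d1" "0 < n + d2"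
  shows "\<bar>(k + e2) / (n + d2) - (k + e1) / (n + d1)\<bar> \<le> d1 / (n + d1) + d2 / (n + d2)"
proof (cases "n = 0")
  case True
  then have "k = 0" using assms by simp
  then have "(k + e1) / (n + d1) \<le> 1" "(k + e2) / (n + d2) \<le> 1"
    "0 \<le> (k + e1) / (n + d1)" "0 \<le> (k + e2) / (n + d2)" using assms True by simp_all
  moreover have "d1 / (n + d1) = 1" "d2 / (n + d2) = 1" using assms True by simp_all
  ultimately show ?thesis by linarith
next
  case False
  then have "0 < n" using assms by simp
  then show ?thesis
    using abs_ratio_shift_le[of n k e1 d1] abs_ratio_shift_le[of n k e2 d2] assms by linarith
qed

lemma card_Int_vimage_split:
  assumes "finite X" "X0 \<subseteq> X"
  shows "card (X \<inter> F -` S) = card (X0 \<inter> F -` S) + card ((X - X0) \<inter> F -` S)"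
proof -
  have "X \<inter> F -` S = (X0 \<inter> F -` S) \<union> ((X - X0) \<inter> F -` S)" using assms by auto
  moreover have "card ((X0 \<inter> F -` S) \<union> ((X - X0) \<inter> F -` S)) = card (X0 \<inter> F -` S) + card ((X - X0) \<inter> F -` S)"
    by (rule card_Un_disjoint) (use assms finite_subset in auto)
  ultimately show ?thesis by simp
qed

lemma SD_map_pmf_of_set_le:
  assumes fA: "finite A" and fB: "finite B" and nA: "A \<noteq> {}" and nB: "B \<noteq> {}"
    and sA: "A0 \<subseteq> A" and sB: "B0 \<subseteq> B" and bij: "bij_betw \<psi> A0 B0"
    and hf: "\<And>x. x \<in> A0 \<Longrightarrow> h (\<psi> x) = f x"
  shows "SD (map_pmf h (pmf_of_set B)) (map_pmf f (pmf_of_set A)) \<le>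
         real (card (A - A0)) / real (card A) + real (card (B - B0)) / real (card B)"
proof (rule SD_le)
  fix S
  have fA0: "finite A0" and fB0: "finite B0" using fA fB sA sB finite_subset by blast+
  define k where "k = card (A0 \<inter> f -` S)"
  have "\<psi> ` (A0 \<inter> f -` S) = B0 \<inter> h -` S"
    using bij hf unfolding bij_betw_def by (auto simp: image_iff)
  then have kB: "card (B0 \<inter> h -` S) = k"
    unfolding k_def by (metis bij bij_betw_def card_image inf_le1 inj_on_subset)
  have cA: "card A = card A0 + card (A - A0)"
    using fA sA fA0 card_mono[OF fA sA] by (simp add: card_Diff_subset)
  have cB: "card B = card A0 + card (B - B0)"
    using fB sB fB0 bij_betw_same_card[OF bij] card_mono[OF fB sB] by (simp add: card_Diff_subset)
  have e1: "card ((A - A0) \<inter> f -` S) \<le> card (A - A0)" using fA by (intro card_mono) auto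
  have e2: "card ((B - B0) \<inter> h -` S) \<le> card (B - B0)" using fB by (intro card_mono) auto
  have kle: "k \<le> card A0" unfolding k_def using fA0 by (intro card_mono) auto
  have pA: "card A > 0" and pB: "card B > 0" using fA nA fB nB by (simp_all add: card_gt_0_iff)
  show "\<bar>measure_pmf.prob (map_pmf h (pmf_of_set B)) S - measure_pmf.prob (map_pmf f (pmf_of_set A)) S\<bar>
        \<le> real (card (A - A0)) / real (card A) + real (card (B - B0)) / real (card B)"
    unfolding measure_map_pmf measure_pmf_of_set[OF nA fA] measure_pmf_of_set[OF nB fB]
      card_Int_vimage_split[OF fA sA] card_Int_vimage_split[OF fB sB] kB k_def[symmetric] cA cB
    using abs_ratio_shift_diff_le[of k "card A0" "card ((A - A0) \<inter> f -` S)" "card (A - A0)"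
        "card ((B - B0) \<inter> h -` S)" "card (B - B0)"] e1 e2 kle pA pB cA cB
    by simp
qed

lemma card_Times_diff_le:
  assumes "finite C1" "finite C2" "A1 \<subseteq> C1" "A2 \<subseteq> C2"
  shows "card (C1 \<times> C2 - A1 \<times> A2) \<le> card (C1 - A1) * card C2 + card C1 * card (C2 - A2)"
proof -
  have "card (C1 \<times> C2 - A1 \<times> A2) \<le> card ((C1 - A1) \<times> C2 \<union> C1 \<times> (C2 - A2))"
    using assms by (intro card_mono) auto
  also have "\<dots> \<le> card ((C1 - A1) \<times> C2) + card (C1 \<times> (C2 - A2))" by (rule card_Un_le)
  finally show ?thesis by (simp add: card_cartesian_product)
qed

lemma ratio_bound:
  fixes x1 x2 c1 c2 b L y :: real
  assumes "0 \<le> x1" "x1 \<le> b" "0 \<le> x2" "x2 \<le> b" "0 < L" "L \<le> c1" "L \<le> c2" "y \<le> x1 * c2 + c1 * x2"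
  shows "y / (c1 * c2) \<le> 2 * b / L"
proof -
  have c: "0 < c1" "0 < c2" using assms by linarith+
  have "y / (c1 * c2) \<le> (x1 * c2 + c1 * x2) / (c1 * c2)" using assms c by (intro divide_right_mono) simp_all
  also have "\<dots> = x1 / c1 + x2 / c2" using c by (simp add: field_simps)
  also have "x1 / c1 \<le> b / L" using assms c by (meson frac_le order_trans)
  also have "x2 / c2 \<le> b / L" using assms c by (meson frac_le order_trans)
  finally show ?thesis by simp
qed


section \<open>The numerical bound\<close>

lemma accepted_count_arith:
  fixes P Q U :: real
  assumes P: "16 \<le> P" and Q: "16 \<le> Q" and U: "P * Q - P - Q \<le> U"
  shows "2 * (P + Q) \<le> U" and "(P * Q) ^ 2 / 4 \<le> U / 2 * (U - 2 * (P + Q))"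
    and "4 * (2 * (P * Q) * (P + Q)) / (U / 2 * (U - 2 * (P + Q))) \<le> 32 / P + 32 / Q"
proof -
  define X where "X = P * Q"
  have "8 * 8 \<le> (P - 8) * (Q - 8)" by (rule mult_mono) (use P Q in auto)
  then have h1: "8 * (P + Q) \<le> X" unfolding X_def by (simp add: algebra_simps)
  have X0: "0 < X" unfolding X_def using P Q by simp
  have "8 * X - 8 * (P + Q) \<le> 8 * U" using U unfolding X_def by simp
  then have U7: "7 * X \<le> 8 * U" using h1 by linarith
  show "2 * (P + Q) \<le> U" using U7 h1 X0 by linarith
  have "(7 * X / 16) * (5 * X / 8) \<le> (U / 2) * (U - 2 * (P + Q))"
    by (rule mult_mono) (use U7 h1 X0 in linarith)+
  moreover have "X ^ 2 / 4 \<le> (7 * X / 16) * (5 * X / 8)"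
    using X0 by (simp add: power2_eq_square field_simps)
  ultimately have L: "X ^ 2 / 4 \<le> U / 2 * (U - 2 * (P + Q))" by linarith
  then show "(P * Q) ^ 2 / 4 \<le> U / 2 * (U - 2 * (P + Q))" unfolding X_def .
  have "4 * (2 * X * (P + Q)) / (U / 2 * (U - 2 * (P + Q))) \<le> 4 * (2 * X * (P + Q)) / (X ^ 2 / 4)"
  proof (rule divide_left_mono[OF L])
    show "0 \<le> 4 * (2 * X * (P + Q))" using X0 P Q by simp
    have "0 < X ^ 2 / 4" using X0 by simp
    moreover from this have "0 < U / 2 * (U - 2 * (P + Q))" using L by linarith
    ultimately show "0 < U / 2 * (U - 2 * (P + Q)) * (X ^ 2 / 4)" by simp
  qed
  also have "\<dots> = 32 / Q + 32 / P" unfolding X_def using X0 P Q by (simp add: power2_eq_square field_simps)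
  finally show "4 * (2 * (P * Q) * (P + Q)) / (U / 2 * (U - 2 * (P + Q))) \<le> 32 / P + 32 / Q"
    unfolding X_def by simp
qed

lemma negligible_128_div_2_pow: "negligible (\<lambda>lam. 128 / 2 ^ lam)"
  unfolding negligible_def
proof
  fix c :: nat
  have "((\<lambda>n::nat. 128 * real n ^ c / 2 ^ n) \<longlongrightarrow> 0) at_top" by real_asymp
  then have "eventually (\<lambda>n. 128 * real n ^ c / 2 ^ n < 1) at_top"
    by (rule order_tendstoD) simp
  then obtain n0 where n0: "\<And>n. n0 \<le> n \<Longrightarrow> 128 * real n ^ c / 2 ^ n < 1"
    unfolding eventually_at_top_linorder by blast
  show "\<exists>n0. \<forall>n\<ge>n0. \<bar>128 / 2 ^ n\<bar> < 1 / real n ^ c"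
  proof (intro exI[of _ "max n0 1"] allI impI)
    fix n assume n: "max n0 1 \<le> n"
    have n_pos: "0 < real n ^ c" using n by simp
    have "128 * real n ^ c / 2 ^ n < 1" using n0 n by simp
    then have "128 / 2 ^ n * real n ^ c < 1" by (simp add: field_simps)
    then have "128 / 2 ^ n < 1 / real n ^ c" using n_pos by (simp add: field_simps)
    then show "\<bar>128 / 2 ^ n\<bar> < 1 / real n ^ c" by simp
  qed
qed


section \<open>Encryption versus evaluation\<close>

locale large_blum_primes = blum_primes +
  assumes p_ge_16: "16 \<le> p" and q_ge_16: "16 \<le> q"
begin

definition accepted_min :: nat where
  "accepted_min = card (units_mod N) div 2 * (card (units_mod N) - 2 * (p + q))"

lemma accepted_min_pos: "0 < accepted_min"
  and accepted_min_bound: "4 * real (2 * (p * q) * (p + q)) / real accepted_min \<le> 32 / p + 32 / q"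
proof -
  let ?U = "card (units_mod N)"
  have "real (p * q) \<le> real (?U + p + q)" using card_units_mod_ge by (simp only: of_nat_le_iff)
  then have U: "real p * real q - real p - real q \<le> real ?U" by simp
  have P: "16 \<le> real p" "16 \<le> real q" using p_ge_16 q_ge_16 by simp_all
  note arith = accepted_count_arith[OF P U]
  have "real (2 * (p + q)) \<le> real ?U" using arith(1) by simp
  then have "2 * (p + q) \<le> ?U" by (simp only: of_nat_le_iff)
  moreover have "?U = 2 * card (unitsJ N 1)" using card_unitsJ[of 1] by simp
  then have "real (?U div 2) = real ?U / 2" by simp
  ultimately have min_eq: "real accepted_min = real ?U / 2 * (real ?U - 2 * (real p + real q))"
    unfolding accepted_min_def by (simp add: of_nat_diff)
  have "0 < (real p * real q) ^ 2 / 4" using p_gt_2 q_gt_2 by simp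
  then have "0 < real accepted_min" using arith(2) min_eq by linarith
  then show "0 < accepted_min" by simp
  have "4 * real (2 * (p * q) * (p + q)) / real accepted_min
      = 4 * (2 * (real p * real q) * (real p + real q)) / (real ?U / 2 * (real ?U - 2 * (real p + real q)))"
    unfolding min_eq by simp
  also have "\<dots> \<le> 32 / p + 32 / q" by (rule arith(3))
  finally show "4 * real (2 * (p * q) * (p + q)) / real accepted_min \<le> 32 / p + 32 / q" .
qed

lemma accepted_nonempty:
  assumes "coprime s N" "\<sigma> = 1 \<or> \<sigma> = -1"
  shows "accepted N s \<sigma> \<noteq> {}"
  using card_accepted_ge[OF assms] accepted_min_pos unfolding accepted_min_def by fastforce

lemma bad_pairs_ratio_le:
  assumes s: "coprime s N" "coprime s' N" and w: "coprime (qnorm s w) N" "coprime (qnorm s' w') N"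
    and \<sigma>: "\<sigma> = 1 \<or> \<sigma> = -1"
  shows "real (card (accepted N s \<sigma> \<times> accepted N s' \<sigma> -
            {u \<in> accepted N s \<sigma>. coeffs_coprime N (qmul s w u)} \<times> {u \<in> accepted N s' \<sigma>. coeffs_coprime N (qmul s' w' u)}))
         / real (card (accepted N s \<sigma> \<times> accepted N s' \<sigma>)) \<le> 2 * real (2 * (p * q) * (p + q)) / real accepted_min"
proof -
  let ?C1 = "accepted N s \<sigma>" and ?C2 = "accepted N s' \<sigma>"
  let ?A1 = "{u \<in> ?C1. coeffs_coprime N (qmul s w u)}" and ?A2 = "{u \<in> ?C2. coeffs_coprime N (qmul s' w' u)}"
  have "?C1 - ?A1 = {u \<in> ?C1. \<not> coeffs_coprime N (qmul s w u)}" "?C2 - ?A2 = {u \<in> ?C2. \<not> coeffs_coprime N (qmul s' w' u)}"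
    by auto
  then have bad: "card (?C1 - ?A1) \<le> 2 * (p * q) * (p + q)" "card (?C2 - ?A2) \<le> 2 * (p * q) * (p + q)"
    using card_not_coeffs_coprime_le w by simp_all
  have "card (?C1 \<times> ?C2 - ?A1 \<times> ?A2) \<le> card (?C1 - ?A1) * card ?C2 + card ?C1 * card (?C2 - ?A2)"
    by (rule card_Times_diff_le[OF finite_accepted finite_accepted]) auto
  then have "real (card (?C1 \<times> ?C2 - ?A1 \<times> ?A2))
      \<le> real (card (?C1 - ?A1)) * real (card ?C2) + real (card ?C1) * real (card (?C2 - ?A2))"
    by (simp only: of_nat_add[symmetric] of_nat_mult[symmetric] of_nat_le_iff)
  moreover have "accepted_min \<le> card ?C1" "accepted_min \<le> card ?C2"
    using card_accepted_ge s \<sigma> unfolding accepted_min_def by auto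
  ultimately have "real (card (?C1 \<times> ?C2 - ?A1 \<times> ?A2)) / (real (card ?C1) * real (card ?C2))
      \<le> 2 * real (2 * (p * q) * (p + q)) / real accepted_min"
    using bad accepted_min_pos
    by (intro ratio_bound[of "real (card (?C1 - ?A1))" _ "real (card (?C2 - ?A2))"]) (simp_all only: of_nat_le_iff of_nat_0_le_iff of_nat_0_less_iff)
  then show ?thesis by (simp add: card_cartesian_product)
qed

lemma E_eq:
  assumes "coprime a N"
  shows "E N a b = map_pmf (\<lambda>(u1, u2). (E_poly N a u1, E_poly N (-a) u2))
                     (pmf_of_set (accepted N a (nu b) \<times> accepted N (-a) (nu b)))"
proof -
  have ne: "accepted N a (nu b) \<times> accepted N (-a) (nu b) \<noteq> {}"
    using accepted_nonempty assms by (simp add: nu_def)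
  have fin: "finite (accepted N a (nu b) \<times> accepted N (-a) (nu b))"
    by (intro finite_cartesian_product finite_accepted)
  have "inj_on interleave (accepted N a (nu b) \<times> accepted N (-a) (nu b))"
    using inj_interleave by (rule inj_on_subset) simp
  then have pmf_eq: "pmf_of_set (E_acc N a b) =
      map_pmf interleave (pmf_of_set (accepted N a (nu b) \<times> accepted N (-a) (nu b)))"
    unfolding E_acc_eq by (rule map_pmf_of_set_inj[OF _ ne fin, symmetric])
  show ?thesis
    unfolding E_def pmf_eq map_pmf_comp by (intro map_pmf_cong) (auto simp: interleave_def E_cand_eq)
qed

lemma Encrypt_eq:
  assumes "coprime (H idt) N"
  shows "Encrypt N H idt b =
    map_pmf (\<lambda>(u1, u2). (E_poly N (H idt) u1, E_poly N (- H idt) u2, H idt))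
      (pmf_of_set (accepted N (H idt) (nu b) \<times> accepted N (- H idt) (nu b)))"
  unfolding Encrypt_def E_eq[OF assms] map_pmf_comp by (simp add: split_def)

lemma set_pmf_Encrypt:
  assumes "coprime (H idt) N" and "ct \<in> set_pmf (Encrypt N H idt b)"
  shows "\<exists>u1 \<in> accepted N (H idt) (nu b). \<exists>u2 \<in> accepted N (- H idt) (nu b).
           ct = (E_poly N (H idt) u1, E_poly N (- H idt) u2, H idt)"
proof -
  have "accepted N (H idt) (nu b) \<times> accepted N (- H idt) (nu b) \<noteq> {}"
    using accepted_nonempty assms(1) by (simp add: nu_def)
  moreover have "finite (accepted N (H idt) (nu b) \<times> accepted N (- H idt) (nu b))"
    by (intro finite_cartesian_product finite_accepted)
  ultimately show ?thesis using assms(2) unfolding Encrypt_eq[of H idt, OF assms(1)] by auto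
qed

lemma SD_rerandomize_le:
  assumes a: "coprime a N" and c: "scaled_square N a c k w" and d: "scaled_square N (-a) d k' w'"
    and k: "Jacobi k N = nu b" "Jacobi k' N = nu b"
  shows "SD (map_pmf (\<lambda>(u1, u2). Some (E_poly N a u1, E_poly N (-a) u2, a))
              (pmf_of_set (accepted N a (nu b) \<times> accepted N (-a) (nu b))))
            (map_pmf (\<lambda>(u1, u2). Some (pmul N a c (E_poly N a u1), pmul N (-a) d (E_poly N (-a) u2), a))
              (pmf_of_set (accepted N a 1 \<times> accepted N (-a) 1)))
         \<le> 32 / p + 32 / q"
proof -
  let ?C = "accepted N a 1 \<times> accepted N (-a) 1" and ?D = "accepted N a (nu b) \<times> accepted N (-a) (nu b)"
  let ?h = "\<lambda>(u1, u2). Some (E_poly N a u1, E_poly N (-a) u2, a)"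
  let ?f = "\<lambda>(u1, u2). Some (pmul N a c (E_poly N a u1), pmul N (-a) d (E_poly N (-a) u2), a)"
  let ?bound = "2 * real (2 * (p * q) * (p + q)) / real accepted_min"
  have a': "coprime (-a) N" using a by simp
  have \<sigma>: "nu b = 1 \<or> nu b = -1" by (simp add: nu_def)
  have cd: "coprime k N" "coprime (qnorm a w) N" "qcong N c (qscale k (qmul a w w))"
    "coprime k' N" "coprime (qnorm (-a) w') N" "qcong N d (qscale k' (qmul (-a) w' w'))"
    using c d unfolding scaled_square_def by auto
  let ?W = "qinv N a w" and ?W' = "qinv N (-a) w'"
  let ?A1 = "{u \<in> accepted N a 1. coeffs_coprime N (qmul a w u)}"
  let ?A2 = "{u \<in> accepted N (-a) 1. coeffs_coprime N (qmul (-a) w' u)}"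
  let ?B1 = "{u \<in> accepted N a (nu b). coeffs_coprime N (qmul a ?W u)}"
  let ?B2 = "{u \<in> accepted N (-a) (nu b). coeffs_coprime N (qmul (-a) ?W' u)}"
  have "bij_betw (transport N a w k) ?A1 ?B1"
    using transport_bij[OF cd(1,2) coprime_qnorm_qinv[OF cd(2)] qinv_qmul[OF cd(2)], of 1] k(1) by simp
  moreover have "bij_betw (transport N (-a) w' k') ?A2 ?B2"
    using transport_bij[OF cd(4,5) coprime_qnorm_qinv[OF cd(5)] qinv_qmul[OF cd(5)], of 1] k(2) by simp
  ultimately have bij: "bij_betw (map_prod (transport N a w k) (transport N (-a) w' k')) (?A1 \<times> ?A2) (?B1 \<times> ?B2)"
    by (rule bij_betw_map_prod)
  have agree: "?h (map_prod (transport N a w k) (transport N (-a) w' k') x) = ?f x" if "x \<in> ?A1 \<times> ?A2" for x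
  proof -
    obtain u1 u2 where x: "x = (u1, u2)" by (cases x)
    have "u1 \<in> accepted N a 1" "coeffs_coprime N (qmul a w u1)"
      "u2 \<in> accepted N (-a) 1" "coeffs_coprime N (qmul (-a) w' u2)" using that x by auto
    then show ?thesis
      using E_poly_transport[OF cd(1,2) _ _ cd(3)] E_poly_transport[OF cd(4,5) _ _ cd(6)] x by simp
  qed
  have nonempty: "?C \<noteq> {}" "?D \<noteq> {}"
    using accepted_nonempty[OF a] accepted_nonempty[OF a'] \<sigma> by simp_all
  have "SD (map_pmf ?h (pmf_of_set ?D)) (map_pmf ?f (pmf_of_set ?C))
      \<le> real (card (?C - ?A1 \<times> ?A2)) / real (card ?C) + real (card (?D - ?B1 \<times> ?B2)) / real (card ?D)"
  proof (rule SD_map_pmf_of_set_le[OF _ _ nonempty _ _ bij])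
    show "finite ?C" "finite ?D" by (intro finite_cartesian_product finite_accepted)+
  qed (use agree in auto)
  also have "\<dots> \<le> ?bound + ?bound"
    using bad_pairs_ratio_le[OF a a' cd(2) cd(5), of 1]
      bad_pairs_ratio_le[OF a a' coprime_qnorm_qinv[OF cd(2)] coprime_qnorm_qinv[OF cd(5)] \<sigma>]
    by (intro add_mono) simp_all
  also have "\<dots> \<le> 32 / p + 32 / q" using accepted_min_bound by simp
  finally show ?thesis .
qed

theorem SD_Encrypt_Eval_le:
  assumes H: "\<forall>x. H x \<in> unitsJ N 1"
    and v: "1 \<le> length v" and bs: "length bs = length v" and cts_len: "length cts = length v"
    and cts: "\<forall>i<length v. cts ! i \<in> set_pmf (Encrypt N H idt (bs ! i))"
  shows "SD (map_pmf Some (Encrypt N H idt (ip2 v bs))) (Eval N v cts) \<le> 32 / p + 32 / q"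
proof -
  define a where "a = H idt"
  define xs where "xs = filter ((!) v) [0..<length v]"
  define c where "c = fold (\<lambda>i acc. pmul N a acc (fst (cts ! i))) xs (1, 0)"
  define d where "d = fold (\<lambda>i acc. pmul N (-a) acc (fst (snd (cts ! i)))) xs (1, 0)"
  have a: "coprime a N" using H unfolding a_def unitsJ_def units_mod_def by auto
  have ct: "\<exists>u1 \<in> accepted N a (nu (bs ! i)). \<exists>u2 \<in> accepted N (-a) (nu (bs ! i)).
      cts ! i = (E_poly N a u1, E_poly N (-a) u2, a)" if "i < length v" for i
    using set_pmf_Encrypt[of H idt "cts ! i" "bs ! i"] a cts that unfolding a_def by blast
  have "snd (snd ct) = a" if "ct \<in> set cts" for ct
  proof -
    from that obtain i where "i < length cts" "ct = cts ! i" by (auto simp: in_set_conv_nth)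
    then show ?thesis using ct[of i] cts_len by auto
  qed
  moreover have "cts \<noteq> []" using v cts_len by auto
  ultimately have "Eval N v cts = map_pmf (\<lambda>(cz, dz). Some (pmul N a c cz, pmul N (-a) d dz, a)) (E N a False)"
    using Eval_eq[of cts a N v] cts_len unfolding c_def d_def xs_def by simp
  also have "\<dots> = map_pmf (\<lambda>(u1, u2). Some (pmul N a c (E_poly N a u1), pmul N (-a) d (E_poly N (-a) u2), a))
      (pmf_of_set (accepted N a 1 \<times> accepted N (-a) 1))"
    unfolding E_eq[OF a] map_pmf_comp by (simp add: nu_def split_def)
  finally have Eval: "Eval N v cts = \<dots>" .
  have Encrypt: "map_pmf Some (Encrypt N H idt (ip2 v bs)) =
      map_pmf (\<lambda>(u1, u2). Some (E_poly N a u1, E_poly N (-a) u2, a))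
        (pmf_of_set (accepted N a (nu (ip2 v bs)) \<times> accepted N (-a) (nu (ip2 v bs))))"
    using Encrypt_eq[of H idt "ip2 v bs"] a unfolding a_def by (simp add: map_pmf_comp split_def)
  have sel: "\<exists>u \<in> accepted N a (nu (bs ! i)). fst (cts ! i) = E_poly N a u"
    "\<exists>u \<in> accepted N (-a) (nu (bs ! i)). fst (snd (cts ! i)) = E_poly N (-a) u" if "i \<in> set xs" for i
    using ct[of i] that unfolding xs_def by auto
  have prod: "prod_list (map (\<lambda>i. nu (bs ! i)) xs) = nu (ip2 v bs)"
    using nu_ip2[OF bs] unfolding xs_def by simp
  obtain k w where "scaled_square N a c k w" "Jacobi k N = nu (ip2 v bs)"
    using fold_pmul_E_poly_scaled_square[where xs = xs and \<sigma> = "\<lambda>i. nu (bs ! i)" and sel = "\<lambda>i. fst (cts ! i)",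
        OF sel(1)]
    unfolding c_def prod by blast
  moreover obtain k' w' where "scaled_square N (-a) d k' w'" "Jacobi k' N = nu (ip2 v bs)"
    using fold_pmul_E_poly_scaled_square[where xs = xs and \<sigma> = "\<lambda>i. nu (bs ! i)" and sel = "\<lambda>i. fst (snd (cts ! i))",
        OF sel(2)]
    unfolding d_def prod by blast
  ultimately show ?thesis unfolding Encrypt Eval using SD_rerandomize_le[OF a] by blast
qed

end


lemma setup_support_large:
  assumes S: "(p, q) \<in> setup_support lam" and lam: "5 \<le> lam"
  shows "large_blum_primes p q" and "32 / real p + 32 / real q \<le> 128 / 2 ^ lam"
proof -
  have "(16::real) \<le> 2 ^ (lam - 1)" using power_increasing[of 4 "lam - 1" "2::real"] lam by simp
  moreover have P: "2 ^ (lam - 1) \<le> real p" "2 ^ (lam - 1) \<le> real q"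
    using S unfolding setup_support_def by (simp_all flip: of_nat_le_iff)
  ultimately have "16 \<le> real p" "16 \<le> real q" by linarith+
  then have pq: "16 \<le> p" "16 \<le> q" by simp_all
  then show "large_blum_primes p q" using S unfolding setup_support_def by unfold_locales auto
  have "32 / real p + 32 / real q \<le> 32 / 2 ^ (lam - 1) + 32 / 2 ^ (lam - 1)"
    using P pq by (intro add_mono divide_left_mono) (auto simp: zero_less_mult_iff)
  also have "(2::real) ^ lam = 2 * 2 ^ (lam - 1)" using lam by (cases lam) auto
  then have "32 / 2 ^ (lam - 1) + 32 / 2 ^ (lam - 1) = 128 / (2::real) ^ lam" by simp
  finally show "32 / real p + 32 / real q \<le> 128 / 2 ^ lam" .
qed

theorem corollary3:
  shows "\<exists>\<mu>::nat \<Rightarrow> real. negligible \<mu> \<and>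
    (\<forall>lam p q (H :: bool list \<Rightarrow> int) idt v bs cts.
       (p, q) \<in> setup_support lam \<longrightarrow>
       (\<forall>x. H x \<in> unitsJ (int (p * q)) 1) \<longrightarrow>
       length v \<ge> 1 \<longrightarrow> length bs = length v \<longrightarrow> length cts = length v \<longrightarrow>
       (\<forall>i<length v. cts ! i \<in> set_pmf (Encrypt (int (p * q)) H idt (bs ! i))) \<longrightarrow>
       SD (map_pmf Some (Encrypt (int (p * q)) H idt (ip2 v bs)))
          (Eval (int (p * q)) v cts) \<le> \<mu> lam)"
proof (intro exI[of _ "\<lambda>lam. 128 / 2 ^ lam"] conjI allI impI)
  show "negligible (\<lambda>lam. 128 / 2 ^ lam)" by (rule negligible_128_div_2_pow)
  fix lam p q and H :: "bool list \<Rightarrow> int" and idt v bs :: "bool list" and cts :: "ctxt list"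
  assume S: "(p, q) \<in> setup_support lam" and H: "\<forall>x. H x \<in> unitsJ (int (p * q)) 1"
    and "length v \<ge> 1" "length bs = length v" "length cts = length v"
    and "\<forall>i<length v. cts ! i \<in> set_pmf (Encrypt (int (p * q)) H idt (bs ! i))"
  show "SD (map_pmf Some (Encrypt (int (p * q)) H idt (ip2 v bs))) (Eval (int (p * q)) v cts) \<le> 128 / 2 ^ lam"
  proof (cases "5 \<le> lam")
    case True
    interpret large_blum_primes p q using setup_support_large(1)[OF S True] .
    have "SD (map_pmf Some (Encrypt N H idt (ip2 v bs))) (Eval N v cts) \<le> 32 / p + 32 / q"
      by (rule SD_Encrypt_Eval_le) fact+
    then show ?thesis using setup_support_large(2)[OF S True] by linarith
  next
    case False
    then have "(2::real) ^ lam \<le> 2 ^ 4" by (intro power_increasing) auto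
    then have "1 \<le> 128 / (2::real) ^ lam" by simp
    then show ?thesis using SD_le_1 order_trans by blast
  qed
qed

end
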